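(* Let $G$ be a convex compact visibility graph. Then every edge of $G$ is either a bridge of $G$ or lies in a triangle ($K_3$) of $G$.
   Context: All graphs are finite and simple. Given a family of pairwise disjoint nonempty connected subsets ("regions") of $\mathbb{R}^2$, a sightline is a closed line segment $\overline{ab}$ with $a\in A$, $b\in B$ for two different regions $A\neq B$ of the family, such that the segment intersects no region of the family other than $A$ and $B$. A graph $G$ is a visibility graph if there is a family of pairwise disjoint nonempty connected subsets of $\mathbb{R}^2$, one for each vertex of $G$ (a visibility representation), such that two distinct vertices are adjacent in $G$ if and only if there is a sightline between their regions. $G$ is a convex compact visibility graph if it has such a representation in which every region is compact and convex. A bridge is an edge whose removal increases the number of connected components. *)

theory Defs
  imports "HOL-Analysis.Analysis"
begin

definition simple_graph :: "'v set \<Rightarrow> ('v \<Rightarrow> 'v \<Rightarrow> bool) \<Rightarrow> bool" where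
  "simple_graph V E \<longleftrightarrow> finite V \<and> (\<forall>u v. E u v \<longrightarrow> u \<in> V \<and> v \<in> V)
     \<and> (\<forall>u v. E u v \<longrightarrow> E v u) \<and> (\<forall>v. \<not> E v v)"

definition sightline :: "'v set \<Rightarrow> ('v \<Rightarrow> (real^2) set) \<Rightarrow> 'v \<Rightarrow> 'v \<Rightarrow> real^2 \<Rightarrow> real^2 \<Rightarrow> bool" where
  "sightline V R u v a b \<longleftrightarrow> u \<in> V \<and> v \<in> V \<and> u \<noteq> v \<and> a \<in> R u \<and> b \<in> R v
     \<and> (\<forall>w\<in>V. w \<noteq> u \<and> w \<noteq> v \<longrightarrow> closed_segment a b \<inter> R w = {})"

definition visibility_rep :: "'v set \<Rightarrow> ('v \<Rightarrow> 'v \<Rightarrow> bool) \<Rightarrow> ('v \<Rightarrow> (real^2) set) \<Rightarrow> bool" where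
  "visibility_rep V E R \<longleftrightarrow>
     (\<forall>v\<in>V. R v \<noteq> {} \<and> connected (R v))
   \<and> (\<forall>u\<in>V. \<forall>v\<in>V. u \<noteq> v \<longrightarrow> R u \<inter> R v = {})
   \<and> (\<forall>u\<in>V. \<forall>v\<in>V. u \<noteq> v \<longrightarrow> (E u v \<longleftrightarrow> (\<exists>a b. sightline V R u v a b)))"

definition convex_compact_visibility_graph :: "'v set \<Rightarrow> ('v \<Rightarrow> 'v \<Rightarrow> bool) \<Rightarrow> bool" where
  "convex_compact_visibility_graph V E \<longleftrightarrow>
     (\<exists>R. visibility_rep V E R \<and> (\<forall>v\<in>V. compact (R v) \<and> convex (R v)))"

definition reach :: "'v set \<Rightarrow> ('v \<Rightarrow> 'v \<Rightarrow> bool) \<Rightarrow> ('v \<times> 'v) set" where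
  "reach V E = {(x, y). x \<in> V \<and> y \<in> V \<and> E x y}\<^sup>* \<inter> (V \<times> V)"

definition num_components :: "'v set \<Rightarrow> ('v \<Rightarrow> 'v \<Rightarrow> bool) \<Rightarrow> nat" where
  "num_components V E = card (V // reach V E)"

definition delete_edge :: "('v \<Rightarrow> 'v \<Rightarrow> bool) \<Rightarrow> 'v \<Rightarrow> 'v \<Rightarrow> ('v \<Rightarrow> 'v \<Rightarrow> bool)" where
  "delete_edge E u v = (\<lambda>x y. E x y \<and> {x, y} \<noteq> {u, v})"

definition is_bridge :: "'v set \<Rightarrow> ('v \<Rightarrow> 'v \<Rightarrow> bool) \<Rightarrow> 'v \<Rightarrow> 'v \<Rightarrow> bool" where
  "is_bridge V E u v \<longleftrightarrow> E u v \<and> num_components V (delete_edge E u v) > num_components V E"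

definition in_triangle :: "'v set \<Rightarrow> ('v \<Rightarrow> 'v \<Rightarrow> bool) \<Rightarrow> 'v \<Rightarrow> 'v \<Rightarrow> bool" where
  "in_triangle V E u v \<longleftrightarrow> E u v \<and> (\<exists>w\<in>V. E u w \<and> E v w)"

end

theory Submission
  imports Defs
begin

text \<open>Let the edge uv lie in no triangle. Every segment from R u to R v then avoids all
  other regions: otherwise, moving one endpoint within R u from a sightline to a blocked
  segment, the first blocking region would see both R u and R v. Next, every point x of
  another region lies in the shadow of R u behind R v or in the shadow of R v behind R u:
  otherwise there is a nondegenerate triangle with vertex x meeting R u and R v only in
  single vertices a and b, and the point of the other regions in it nearest to ab sees both
  a and b. A segment joining a point of the first kind to one of the second kind must cross
  R u or R v (consider the point of R u \<union> R v nearest to the segment). By convexity, each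
  other region lies entirely in one of the two shadows, and apart from uv no sightline joins
  u and the regions in the shadow of R u to the remaining vertices, so uv is a bridge.\<close>

section \<open>Segments and convex combinations\<close>

lemma mem_closed_segment_truncate:
  fixes p q y z :: "'a::euclidean_space"
  assumes "z \<in> closed_segment p q" "y \<in> closed_segment z q"
  shows "z \<in> closed_segment p y"
proof -
  have "closed_segment z q \<subseteq> closed_segment p q"
    using assms(1) by (simp add: closed_segment_subset)
  then have "y \<in> closed_segment p q"
    using assms(2) by auto
  then show ?thesis
    using assms between_swap[of p q z y] by (simp add: between_mem_segment)
qed

lemma eq_if_mem_closed_segment_dist_ge:
  fixes y z q :: "'a::real_normed_vector"
  assumes "y \<in> closed_segment z q" "dist z q \<le> dist y q"
  shows "y = z"
proof -
  obtain r where r: "0 \<le> r" "r \<le> 1" "y = (1 - r) *\<^sub>R z + r *\<^sub>R q"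
    using assms(1) by (auto simp: in_segment)
  have "y - q = (1 - r) *\<^sub>R (z - q)"
    using r(3) by (simp add: algebra_simps)
  then have "dist y q = (1 - r) * dist z q"
    using r by (simp add: dist_norm)
  with assms(2) have "r * dist z q \<le> 0"
    by (simp add: algebra_simps)
  then have "r = 0 \<or> z = q"
    using r(1) by (metis dist_eq_0_iff dist_pos_lt linorder_not_le mult_pos_pos order_le_less)
  then show ?thesis
    using r by auto
qed

lemma closed_segment_first_point:
  fixes x c :: "'a::euclidean_space"
  assumes "compact A" "closed_segment x c \<inter> A \<noteq> {}"
  obtains a where "a \<in> A" "a \<in> closed_segment x c"
    "\<And>z. z \<in> closed_segment x a \<Longrightarrow> z \<in> A \<Longrightarrow> z = a"
proof -
  define S where "S = closed_segment x c \<inter> A"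
  have "compact S"
    unfolding S_def using assms(1) by (intro compact_Int) auto
  moreover have "continuous_on S (\<lambda>y. dist y x)"
    by (intro continuous_intros)
  ultimately obtain a where a: "a \<in> S" "\<forall>y\<in>S. dist a x \<le> dist y x"
    using continuous_attains_inf[of S] assms(2) unfolding S_def by blast
  have "z = a" if z: "z \<in> closed_segment x a" "z \<in> A" for z
  proof -
    have "closed_segment x a \<subseteq> closed_segment x c"
      using a(1) by (intro closed_segment_subset) (auto simp: S_def)
    then have "dist a x \<le> dist z x"
      using z a(2) by (auto simp: S_def)
    moreover have "z \<in> closed_segment a x"
      using z(1) by (simp add: closed_segment_commute)
    ultimately show "z = a"
      by (rule eq_if_mem_closed_segment_dist_ge[rotated])
  qed
  then show ?thesis
    using that a(1) by (auto simp: S_def)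
qed

lemma compact_segment_family_meets:
  fixes f g :: "real \<Rightarrow> 'a::euclidean_space"
  assumes "continuous_on {0..1} f" "continuous_on {0..1} g" "compact S"
  shows "compact {t \<in> {0..1}. closed_segment (f t) (g t) \<inter> S \<noteq> {}}"
proof -
  define h where "h = (\<lambda>z. (1 - snd z) *\<^sub>R f (fst z) + snd z *\<^sub>R g (fst z))"
  have "continuous_on ({0..1} \<times> {0..1}) (\<lambda>z. f (fst z))"
    by (rule continuous_on_compose2[OF assms(1)]) (auto intro: continuous_intros)
  moreover have "continuous_on ({0..1} \<times> {0..1}) (\<lambda>z. g (fst z))"
    by (rule continuous_on_compose2[OF assms(2)]) (auto intro: continuous_intros)
  ultimately have "continuous_on ({0..1} \<times> {0..1}) h"
    unfolding h_def by (intro continuous_intros)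
  then have "closed (({0..1} \<times> {0..1}) \<inter> h -` S)"
    by (rule continuous_closed_preimage) (auto intro: closed_Times compact_imp_closed assms(3))
  then have "compact (({0..1::real} \<times> {0..1::real}) \<inter> (({0..1} \<times> {0..1}) \<inter> h -` S))"
    by (intro compact_Int_closed compact_Times compact_Icc)
  then have "compact (({0..1::real} \<times> {0..1::real}) \<inter> h -` S)"
    by (simp add: Int_assoc[symmetric])
  then have "compact (fst ` (({0..1} \<times> {0..1}) \<inter> h -` S))"
    by (intro compact_continuous_image continuous_intros)
  moreover have "{t \<in> {0..1}. closed_segment (f t) (g t) \<inter> S \<noteq> {}}
      = fst ` (({0..1} \<times> {0..1}) \<inter> h -` S)"
    by (force simp: h_def in_segment image_iff)
  ultimately show ?thesis
    by simp
qed

lemma infdist_convex_combination_le: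
  fixes a b c :: "'a::euclidean_space"
  assumes "a \<in> S" "b \<in> S" "convex S" "closed S"
    and "0 \<le> \<alpha>" "0 \<le> \<beta>" "0 \<le> \<gamma>" "\<alpha> + \<beta> + \<gamma> = 1"
  shows "infdist (\<alpha> *\<^sub>R a + \<beta> *\<^sub>R b + \<gamma> *\<^sub>R c) S \<le> \<gamma> * infdist c S"
proof -
  obtain m where m: "m \<in> S" "infdist c S = dist c m"
    using infdist_attains_inf[OF assms(4)] assms(1) by blast
  have "convex hull {a, b, m} \<subseteq> S"
    using assms(1-3) m(1) by (simp add: hull_minimal)
  then have mem: "\<alpha> *\<^sub>R a + \<beta> *\<^sub>R b + \<gamma> *\<^sub>R m \<in> S"
    using assms(5-8) by (auto simp: convex_hull_3)
  have "infdist (\<alpha> *\<^sub>R a + \<beta> *\<^sub>R b + \<gamma> *\<^sub>R c) S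
      \<le> dist (\<alpha> *\<^sub>R a + \<beta> *\<^sub>R b + \<gamma> *\<^sub>R c) (\<alpha> *\<^sub>R a + \<beta> *\<^sub>R b + \<gamma> *\<^sub>R m)"
    by (rule infdist_le[OF mem])
  also have "\<dots> = norm (\<gamma> *\<^sub>R (c - m))"
    by (simp add: dist_norm algebra_simps)
  also have "\<dots> = \<gamma> * dist c m"
    using assms(7) by (simp add: dist_norm)
  finally show ?thesis
    using m by simp
qed

lemma closed_segment_cevians_meet:
  fixes x a b \<alpha> \<beta> :: "'a::real_vector"
  assumes "\<alpha> \<in> closed_segment x b" "\<alpha> \<noteq> x" "\<alpha> \<noteq> b"
    and "\<beta> \<in> closed_segment x a" "\<beta> \<noteq> x" "\<beta> \<noteq> a"
  shows "closed_segment \<alpha> a \<inter> closed_segment b \<beta> \<noteq> {}"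
proof -
  have "\<alpha> \<in> open_segment x b" "\<beta> \<in> open_segment x a"
    using assms by (auto simp: open_segment_def)
  then obtain s t where s: "0 < s" "s < 1" "\<alpha> = (1 - s) *\<^sub>R x + s *\<^sub>R b"
    and t: "0 < t" "t < 1" "\<beta> = (1 - t) *\<^sub>R x + t *\<^sub>R a"
    by (auto simp: in_segment)
  have "s * t < s"
    using s t by simp
  then have den: "0 < 1 - s * t"
    using s by linarith
  define l where "l = (1 - s) * t / (1 - s * t)"
  define m where "m = (1 - s) / (1 - s * t)"
  have "(1 - s) * t \<le> 1 - s * t" "1 - s \<le> 1 - s * t"
    using s(1,2) t(1,2) \<open>s * t < s\<close> by (simp_all add: algebra_simps)
  then have "0 \<le> l" "l \<le> 1" "0 \<le> m" "m \<le> 1"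
    using s(1,2) t(1,2) den by (simp_all add: l_def m_def)
  then have "(1 - l) *\<^sub>R \<alpha> + l *\<^sub>R a \<in> closed_segment \<alpha> a"
    and "(1 - m) *\<^sub>R b + m *\<^sub>R \<beta> \<in> closed_segment b \<beta>"
    by (auto simp: in_segment)
  moreover have "(1 - l) *\<^sub>R \<alpha> + l *\<^sub>R a = (1 - m) *\<^sub>R b + m *\<^sub>R \<beta>"
  proof -
    have "(1 - l) * (1 - s) = m * (1 - t)" "(1 - l) * s = 1 - m" "l = m * t"
      using den by (simp_all add: l_def m_def field_simps)
    moreover have "(1 - l) *\<^sub>R \<alpha> + l *\<^sub>R a = ((1 - l) * (1 - s)) *\<^sub>R x + ((1 - l) * s) *\<^sub>R b + l *\<^sub>R a"
      by (simp add: s(3) algebra_simps)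
    moreover have "(1 - m) *\<^sub>R b + m *\<^sub>R \<beta> = (m * (1 - t)) *\<^sub>R x + (1 - m) *\<^sub>R b + (m * t) *\<^sub>R a"
      by (simp add: t(3) algebra_simps)
    ultimately show ?thesis
      by simp
  qed
  ultimately show ?thesis
    by auto
qed

lemma eq_if_nearest_to_segment:
  fixes a b c y :: "'a::euclidean_space"
  assumes "c \<in> K" "c \<notin> closed_segment a b"
    and nearest: "\<And>z. z \<in> K \<Longrightarrow> infdist c (closed_segment a b) \<le> infdist z (closed_segment a b)"
    and "y \<in> convex hull {a, b, c}" "y \<in> K"
  shows "y = c"
proof -
  obtain \<alpha> \<beta> \<gamma> where abc: "0 \<le> \<alpha>" "0 \<le> \<beta>" "0 \<le> \<gamma>" "\<alpha> + \<beta> + \<gamma> = 1"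
    "y = \<alpha> *\<^sub>R a + \<beta> *\<^sub>R b + \<gamma> *\<^sub>R c"
    using assms(4) by (auto simp: convex_hull_3)
  have pos: "0 < infdist c (closed_segment a b)"
    using assms(2) by (intro infdist_pos_not_in_closed) auto
  have "infdist c (closed_segment a b) \<le> infdist y (closed_segment a b)"
    using nearest assms(5) .
  also have "\<dots> \<le> \<gamma> * infdist c (closed_segment a b)"
    unfolding abc(5) by (rule infdist_convex_combination_le) (use abc in auto)
  finally have "1 \<le> \<gamma>"
    using pos by simp
  then have "\<alpha> = 0" "\<beta> = 0" "\<gamma> = 1"
    using abc(1-4) by auto
  then show ?thesis
    using abc(5) by simp
qed

definition shadow :: "'a::real_vector set \<Rightarrow> 'a set \<Rightarrow> 'a set" where
  "shadow A B = {x. \<forall>q\<in>B. closed_segment x q \<inter> A \<noteq> {}}"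

lemma closed_segment_between_shadows_meets:
  fixes A B :: "'a::euclidean_space set"
  assumes "compact A" "compact B" "A \<union> B \<noteq> {}" "A \<inter> B = {}"
    and "x \<in> shadow A B" "y \<in> shadow B A"
  shows "closed_segment x y \<inter> (A \<union> B) \<noteq> {}"
proof
  assume clear: "closed_segment x y \<inter> (A \<union> B) = {}"
  define S where "S = closed_segment x y"
  have "continuous_on (A \<union> B) (\<lambda>z. infdist z S)"
    by (intro continuous_intros)
  then obtain w where w: "w \<in> A \<union> B" "\<forall>z\<in>A \<union> B. infdist w S \<le> infdist z S"
    using continuous_attains_inf[of "A \<union> B"] assms(1-3) by blast
  have "w \<notin> S"
    using w(1) clear by (auto simp: S_def)
  then have pos: "0 < infdist w S"
    by (intro infdist_pos_not_in_closed) (auto simp: S_def)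
  \<comment> \<open>the segment from a suitable endpoint of S to w meets the other set strictly nearer to S\<close>
  have closer: "\<exists>z\<in>C. infdist z S < infdist w S"
    if wD: "w \<in> D" and e: "e \<in> shadow C D" "e \<in> S" and CD: "C \<inter> D = {}" for C D e
  proof -
    obtain z where z: "z \<in> closed_segment e w" "z \<in> C"
      using wD e(1) by (auto simp: shadow_def)
    then obtain s where s: "0 \<le> s" "s \<le> 1" "z = (1 - s) *\<^sub>R e + s *\<^sub>R w"
      by (auto simp: in_segment)
    have "s \<noteq> 1"
      using s(3) z(2) wD CD by auto
    have "infdist z S \<le> s * infdist w S"
      using infdist_convex_combination_le[of e S e "1 - s" 0 s w] e(2) s
      by (auto simp: S_def)
    also have "\<dots> < infdist w S"
      using \<open>s \<noteq> 1\<close> s(2) pos by simp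
    finally show ?thesis
      using z(2) by blast
  qed
  show False
  proof (cases "w \<in> B")
    case True
    then show False
      using closer[where C=A and D=B and e=x] w assms(4,5) by (force simp: S_def)
  next
    case False
    then show False
      using closer[where C=B and D=A and e=y] w assms(4,6) by (force simp: S_def)
  qed
qed

lemma last_ray_meeting:
  fixes x p q :: "'a::euclidean_space"
  assumes "compact A" "x \<notin> A" "p \<in> A" "closed_segment x q \<inter> A = {}"
  obtains t a l where "0 \<le> t" "t < 1"
    "\<And>s. t < s \<Longrightarrow> s \<le> 1 \<Longrightarrow> closed_segment x ((1 - s) *\<^sub>R p + s *\<^sub>R q) \<inter> A = {}"
    "a \<in> A" "a = x + l *\<^sub>R ((1 - t) *\<^sub>R p + t *\<^sub>R q - x)" "0 < l" "l \<le> 1"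
    "\<And>z. z \<in> closed_segment x a \<Longrightarrow> z \<in> A \<Longrightarrow> z = a"
proof -
  define T where "T = {t \<in> {0..1}. closed_segment x ((1 - t) *\<^sub>R p + t *\<^sub>R q) \<inter> A \<noteq> {}}"
  have "compact T"
    unfolding T_def using assms(1) by (intro compact_segment_family_meets continuous_intros)
  moreover have "0 \<in> T"
    using assms(3) by (auto simp: T_def)
  ultimately obtain t where t: "t \<in> T" "\<And>s. s \<in> T \<Longrightarrow> s \<le> t"
    using compact_attains_sup[of T] by blast
  have "t \<noteq> 1"
    using t(1) assms(4) by (auto simp: T_def)
  then have t01: "0 \<le> t" "t < 1"
    using t(1) by (auto simp: T_def)
  have beyond: "closed_segment x ((1 - s) *\<^sub>R p + s *\<^sub>R q) \<inter> A = {}" if "t < s" "s \<le> 1" for s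
    using t(2)[of s] that t01 by (force simp: T_def)
  obtain a where a: "a \<in> A" "a \<in> closed_segment x ((1 - t) *\<^sub>R p + t *\<^sub>R q)"
    "\<And>z. z \<in> closed_segment x a \<Longrightarrow> z \<in> A \<Longrightarrow> z = a"
  proof (rule closed_segment_first_point[OF assms(1)])
    show "closed_segment x ((1 - t) *\<^sub>R p + t *\<^sub>R q) \<inter> A \<noteq> {}"
      using t(1) by (simp add: T_def)
  qed blast
  then obtain l where l: "0 \<le> l" "l \<le> 1" "a = x + l *\<^sub>R ((1 - t) *\<^sub>R p + t *\<^sub>R q - x)"
    by (auto simp: in_segment algebra_simps)
  have "l \<noteq> 0"
    using l(3) a(1) assms(2) by auto
  with l show thesis
    using that t01 beyond a by auto
qed

lemma convex_hull_3_eq_cone: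
  fixes a b x :: "'a::real_vector"
  assumes "y \<in> convex hull {a, b, x}"
  obtains k r where "0 \<le> k" "0 \<le> r" "k + r \<le> 1" "y = x + k *\<^sub>R (a - x) + r *\<^sub>R (b - x)"
proof -
  have "y \<in> convex hull {x, a, b}"
    using assms by (simp add: insert_commute)
  then show thesis
    using that by (auto simp: convex_hull_3_alt)
qed

lemma mem_closed_segment_to_chord:
  fixes x p q :: "'a::real_vector"
  assumes "y = x + \<alpha> *\<^sub>R (p - x) + \<beta> *\<^sub>R (q - x)" "0 \<le> \<alpha>" "0 \<le> \<beta>" "0 < \<alpha> + \<beta>" "\<alpha> + \<beta> \<le> 1"
  shows "y \<in> closed_segment x ((1 - \<beta> / (\<alpha> + \<beta>)) *\<^sub>R p + (\<beta> / (\<alpha> + \<beta>)) *\<^sub>R q)"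
proof -
  have "(\<alpha> + \<beta>) * (1 - \<beta> / (\<alpha> + \<beta>)) = \<alpha>" "(\<alpha> + \<beta>) * (\<beta> / (\<alpha> + \<beta>)) = \<beta>"
    using assms(4) by (simp_all add: field_simps)
  then have "(\<alpha> + \<beta>) *\<^sub>R ((1 - \<beta> / (\<alpha> + \<beta>)) *\<^sub>R p + (\<beta> / (\<alpha> + \<beta>)) *\<^sub>R q) = \<alpha> *\<^sub>R p + \<beta> *\<^sub>R q"
    by (simp add: scaleR_add_right)
  then have "y = (1 - (\<alpha> + \<beta>)) *\<^sub>R x + (\<alpha> + \<beta>) *\<^sub>R ((1 - \<beta> / (\<alpha> + \<beta>)) *\<^sub>R p + (\<beta> / (\<alpha> + \<beta>)) *\<^sub>R q)"
    using assms(1) by (simp add: algebra_simps)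
  then show ?thesis
    using assms(4,5) unfolding in_segment by (intro exI[of _ "\<alpha> + \<beta>"]) auto
qed

lemma exists_less_not_in_closed:
  fixes t :: real
  assumes "closed M" "t \<notin> M" "0 < t"
  obtains s where "0 \<le> s" "s < t" "s \<notin> M"
proof -
  obtain e where e: "0 < e" "ball t e \<subseteq> - M"
    using assms(1,2) by (auto simp: closed_def elim: openE)
  define s where "s = max 0 (t - e / 2)"
  have "s \<in> ball t e"
    using e(1) assms(3) by (auto simp: s_def dist_real_def)
  then show thesis
    using that[of s] e assms(3) by (auto simp: s_def)
qed

lemma mem_closed_segment_fan:
  fixes p p' q :: "'a::real_vector"
  assumes z: "z = (1 - \<sigma>) *\<^sub>R ((1 - l1) *\<^sub>R p + l1 *\<^sub>R p') + \<sigma> *\<^sub>R q" "0 \<le> \<sigma>" "\<sigma> \<le> 1"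
    and y: "y = (1 - r) *\<^sub>R z + r *\<^sub>R ((1 - l) *\<^sub>R p + l *\<^sub>R p')" "0 < r" "r \<le> 1"
    and l: "0 \<le> l" "l < l1"
  obtains \<mu> where "0 \<le> \<mu>" "\<mu> < l1" "y \<in> closed_segment ((1 - \<mu>) *\<^sub>R p + \<mu> *\<^sub>R p') q"
proof -
  define \<tau> where "\<tau> = (1 - r) * \<sigma>"
  define m where "m = (1 - r) * (1 - \<sigma>) * l1 + r * l"
  have "\<tau> \<le> 1 - r" "0 \<le> \<tau>"
    using y(2,3) z(2,3) mult_left_mono[of \<sigma> 1 "1 - r"] by (simp_all add: \<tau>_def)
  then have pos: "0 < 1 - \<tau>"
    using y(2) by linarith
  define \<mu> where "\<mu> = m / (1 - \<tau>)"
  have one_minus_\<tau>: "1 - \<tau> = (1 - r) * (1 - \<sigma>) + r"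
    by (simp add: \<tau>_def algebra_simps)
  have "0 \<le> m"
    using y z l by (simp add: m_def)
  moreover have "m < l1 * (1 - \<tau>)"
    unfolding m_def one_minus_\<tau> using y(2) l by (simp add: algebra_simps)
  ultimately have "0 \<le> \<mu>" "\<mu> < l1"
    using pos by (simp_all add: \<mu>_def divide_less_eq)
  have "(1 - \<tau>) * \<mu> = m"
    using pos by (simp add: \<mu>_def)
  moreover have "(1 - \<tau>) * (1 - \<mu>) = 1 - \<tau> - m"
    using \<open>(1 - \<tau>) * \<mu> = m\<close> by (simp add: algebra_simps)
  moreover have "(1 - \<tau>) *\<^sub>R ((1 - \<mu>) *\<^sub>R p + \<mu> *\<^sub>R p')
      = ((1 - \<tau>) * (1 - \<mu>)) *\<^sub>R p + ((1 - \<tau>) * \<mu>) *\<^sub>R p'"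
    by (simp add: scaleR_add_right)
  ultimately have "(1 - \<tau>) *\<^sub>R ((1 - \<mu>) *\<^sub>R p + \<mu> *\<^sub>R p') = (1 - \<tau> - m) *\<^sub>R p + m *\<^sub>R p'"
    by simp
  then have "y = (1 - \<tau>) *\<^sub>R ((1 - \<mu>) *\<^sub>R p + \<mu> *\<^sub>R p') + \<tau> *\<^sub>R q"
    by (simp add: y(1) z(1) \<tau>_def m_def algebra_simps)
  then have "y \<in> closed_segment ((1 - \<mu>) *\<^sub>R p + \<mu> *\<^sub>R p') q"
    using pos \<open>0 \<le> \<tau>\<close> by (auto simp: in_segment)
  then show thesis
    using that \<open>0 \<le> \<mu>\<close> \<open>\<mu> < l1\<close> by blast
qed

section \<open>Orientation in the plane\<close>

definition det2 :: "real^2 \<Rightarrow> real^2 \<Rightarrow> real" where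
  "det2 x y = x$1 * y$2 - x$2 * y$1"

lemma det2_linear [simp]:
  "det2 (x + y) z = det2 x z + det2 y z" "det2 z (x + y) = det2 z x + det2 z y"
  "det2 (x - y) z = det2 x z - det2 y z" "det2 z (x - y) = det2 z x - det2 z y"
  "det2 (c *\<^sub>R x) z = c * det2 x z" "det2 z (c *\<^sub>R x) = c * det2 z x"
  by (simp_all add: det2_def algebra_simps)

lemma det2_self [simp]: "det2 x x = 0"
  by (simp add: det2_def)

lemma det2_antisym: "det2 x y = - det2 y x"
  by (simp add: det2_def)

lemma det2_eq_0_imp_parallel:
  assumes "det2 x y = 0" "x \<noteq> 0"
  obtains k where "y = k *\<^sub>R x"
proof (cases "x$1 = 0")
  case False
  then have "y = (y$1 / x$1) *\<^sub>R x"
    using assms(1) unfolding vec_eq_iff forall_2 by (auto simp: det2_def field_simps)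
  then show thesis
    by (rule that)
next
  case True
  then have "x$2 \<noteq> 0"
    using assms(2) by (metis exhaust_2 vec_eq_iff zero_index)
  then have "y = (y$2 / x$2) *\<^sub>R x"
    using assms(1) unfolding vec_eq_iff forall_2 by (auto simp: det2_def field_simps)
  then show thesis
    by (rule that)
qed

lemma collinear_if_det2_eq_0:
  assumes "det2 (p - x) (q - x) = 0"
  shows "collinear {p, x, q}"
proof (cases "p = x")
  case True
  then show ?thesis
    by (simp add: collinear_2)
next
  case False
  then obtain k where "q - x = k *\<^sub>R (p - x)"
    using det2_eq_0_imp_parallel[OF assms] by auto
  then have "collinear {0, p - x, q - x}"
    by (auto simp: collinear_lemma)
  then show ?thesis
    by (subst collinear_3) auto
qed

lemma det2_neq_0_if_none_between:
  assumes "x \<notin> closed_segment p q" "p \<notin> closed_segment x q" "q \<notin> closed_segment x p"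
  shows "det2 (p - x) (q - x) \<noteq> 0"
proof -
  have "\<not> collinear {p, x, q}"
    using assms by (auto simp: collinear_between_cases between_mem_segment closed_segment_commute)
  then show ?thesis
    using collinear_if_det2_eq_0 by blast
qed

lemma eq_if_vertex_on_segment_into_triangle:
  assumes "c \<in> convex hull {a, b, c0}" "det2 (a - c0) (b - c0) \<noteq> 0" "b \<in> closed_segment a c"
  shows "b = c"
proof -
  obtain \<alpha> \<beta> where \<alpha>\<beta>: "0 \<le> \<alpha>" "0 \<le> \<beta>" "\<alpha> + \<beta> \<le> 1" "c = c0 + \<alpha> *\<^sub>R (a - c0) + \<beta> *\<^sub>R (b - c0)"
    using assms(1) by (rule convex_hull_3_eq_cone) (simp add: insert_commute)
  obtain s where s: "0 \<le> s" "s \<le> 1" "b = (1 - s) *\<^sub>R a + s *\<^sub>R c"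
    using assms(3) by (auto simp: in_segment)
  have "b - c0 = (1 - s) *\<^sub>R (a - c0) + s *\<^sub>R (\<alpha> *\<^sub>R (a - c0) + \<beta> *\<^sub>R (b - c0))"
    using s(3) \<alpha>\<beta>(4) by (simp add: algebra_simps)
  moreover have "det2 A B = s * \<beta> * det2 A B"
    if "B = (1 - s) *\<^sub>R A + s *\<^sub>R (\<alpha> *\<^sub>R A + \<beta> *\<^sub>R B)" for A B
    by (subst (1) that) (simp add: algebra_simps)
  ultimately have "det2 (a - c0) (b - c0) = s * \<beta> * det2 (a - c0) (b - c0)"
    by blast
  then have "s * \<beta> = 1"
    using assms(2) by simp
  moreover have "s * \<beta> \<le> s"
    using s(1) \<alpha>\<beta> mult_left_mono[of \<beta> 1 s] by simp
  ultimately have "s = 1"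
    using s(2) by linarith
  then show ?thesis
    using s(3) by simp
qed

section \<open>Triangles meeting a set only at a vertex\<close>

text \<open>Seen from x, the direction of x + \<alpha> u + \<beta> w is determined by \<beta> / (\<alpha> + \<beta>), so this
  picks a point of Q in the triangle x, x + u, x + w whose direction is closest to u.\<close>

lemma exists_point_of_least_slope:
  fixes x u w :: "'a::euclidean_space"
  assumes "compact Q" "x \<notin> Q" "x + w \<in> Q"
  obtains \<alpha>0 \<beta>0 where "0 \<le> \<alpha>0" "0 \<le> \<beta>0" "\<alpha>0 + \<beta>0 \<le> 1" "x + \<alpha>0 *\<^sub>R u + \<beta>0 *\<^sub>R w \<in> Q"
    "\<And>\<alpha> \<beta>. 0 \<le> \<alpha> \<Longrightarrow> 0 \<le> \<beta> \<Longrightarrow> \<alpha> + \<beta> \<le> 1 \<Longrightarrow> x + \<alpha> *\<^sub>R u + \<beta> *\<^sub>R w \<in> Q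
      \<Longrightarrow> \<beta>0 / (\<alpha>0 + \<beta>0) \<le> \<beta> / (\<alpha> + \<beta>)"
proof -
  define D where "D = {z::real \<times> real. 0 \<le> fst z \<and> 0 \<le> snd z \<and> fst z + snd z \<le> 1}"
  define g where "g z = x + fst z *\<^sub>R u + snd z *\<^sub>R w" for z
  define K where "K = D \<inter> g -` Q"
  have "closed D"
    unfolding D_def by (intro closed_Collect_conj closed_Collect_le continuous_intros)
  moreover have "D = ({0..1} \<times> {0..1}) \<inter> D"
    by (auto simp: D_def)
  ultimately have "compact D"
    by (metis compact_Icc compact_Int_closed compact_Times)
  moreover have "continuous_on D g"
    unfolding g_def by (intro continuous_intros)
  ultimately have "closed K"
    unfolding K_def using assms(1) by (intro continuous_closed_preimage) (auto intro: compact_imp_closed)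
  then have "compact K"
    using \<open>compact D\<close> compact_Int_closed[of D K] by (simp add: K_def Int_assoc[symmetric])
  have nz: "fst z + snd z \<noteq> 0" if "z \<in> K" for z
  proof
    assume "fst z + snd z = 0"
    moreover have "0 \<le> fst z" "0 \<le> snd z"
      using that by (auto simp: K_def D_def)
    ultimately have "fst z = 0" "snd z = 0"
      by linarith+
    then have "g z = x"
      by (simp add: g_def)
    then show False
      using that assms(2) by (simp add: K_def)
  qed
  have "continuous_on K (\<lambda>z. snd z / (fst z + snd z))"
    using nz by (intro continuous_intros) auto
  moreover have "(0, 1) \<in> K"
    using assms(3) by (simp add: K_def D_def g_def)
  ultimately obtain z0 where z0: "z0 \<in> K" "\<forall>z\<in>K. snd z0 / (fst z0 + snd z0) \<le> snd z / (fst z + snd z)"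
    using continuous_attains_inf[OF \<open>compact K\<close>] by blast
  show thesis
  proof (rule that[of "fst z0" "snd z0"])
    fix \<alpha> \<beta> :: real
    assume "0 \<le> \<alpha>" "0 \<le> \<beta>" "\<alpha> + \<beta> \<le> 1" "x + \<alpha> *\<^sub>R u + \<beta> *\<^sub>R w \<in> Q"
    then have "(\<alpha>, \<beta>) \<in> K"
      by (simp add: K_def D_def g_def)
    then show "snd z0 / (fst z0 + snd z0) \<le> \<beta> / (\<alpha> + \<beta>)"
      using z0(2) by fastforce
  qed (use z0(1) in \<open>auto simp: K_def D_def g_def\<close>)
qed

lemma eq_if_mem_triangle_of_least_slope:
  fixes x a q b y :: "'a::euclidean_space"
  assumes least: "\<And>\<alpha> \<beta>. 0 \<le> \<alpha> \<Longrightarrow> 0 \<le> \<beta> \<Longrightarrow> \<alpha> + \<beta> \<le> 1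
      \<Longrightarrow> x + \<alpha> *\<^sub>R (a - x) + \<beta> *\<^sub>R (q - x) \<in> Q \<Longrightarrow> \<rho> / (\<kappa> + \<rho>) \<le> \<beta> / (\<alpha> + \<beta>)"
    and "x \<notin> Q"
    and b: "b - x = \<kappa> *\<^sub>R (a - x) + \<rho> *\<^sub>R (q - x)" "0 \<le> \<kappa>" "0 < \<rho>" "\<kappa> + \<rho> \<le> 1"
    and first: "\<And>z. z \<in> closed_segment x b \<Longrightarrow> z \<in> Q \<Longrightarrow> z = b"
    and y: "y \<in> convex hull {a, b, x}" "y \<in> Q"
  shows "y = b"
proof -
  obtain k r where kr: "0 \<le> k" "0 \<le> r" "k + r \<le> 1" "y = x + k *\<^sub>R (a - x) + r *\<^sub>R (b - x)"
    using y(1) by (rule convex_hull_3_eq_cone)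
  define \<alpha> \<beta> where "\<alpha> = k + r * \<kappa>" and "\<beta> = r * \<rho>"
  have y_eq: "y = x + \<alpha> *\<^sub>R (a - x) + \<beta> *\<^sub>R (q - x)"
    using kr(4) b(1) by (simp add: \<alpha>_def \<beta>_def algebra_simps)
  have "r * (\<kappa> + \<rho>) \<le> r"
    using b(4) kr(2) mult_left_mono[of _ 1 r] by simp
  then have "\<alpha> + \<beta> \<le> 1"
    using kr(3) by (simp add: \<alpha>_def \<beta>_def algebra_simps)
  moreover have "0 \<le> \<alpha>" "0 \<le> \<beta>"
    using kr b by (simp_all add: \<alpha>_def \<beta>_def)
  ultimately have slope: "\<rho> / (\<kappa> + \<rho>) \<le> \<beta> / (\<alpha> + \<beta>)"
    using least y_eq y(2) by simp
  have "\<alpha> + \<beta> \<noteq> 0"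
  proof
    assume "\<alpha> + \<beta> = 0"
    then have "\<alpha> = 0" "\<beta> = 0"
      using \<open>0 \<le> \<alpha>\<close> \<open>0 \<le> \<beta>\<close> by linarith+
    then show False
      using y_eq y(2) assms(2) by simp
  qed
  then have "\<rho> * (\<alpha> + \<beta>) \<le> \<beta> * (\<kappa> + \<rho>)"
    using slope b(2,3) \<open>0 \<le> \<alpha>\<close> \<open>0 \<le> \<beta>\<close> by (simp add: divide_le_eq le_divide_eq)
  then have "\<rho> * k \<le> 0"
    by (simp add: \<alpha>_def \<beta>_def algebra_simps)
  then have "k = 0"
    using b(3) kr(1) by (simp add: mult_le_0_iff)
  then have "y \<in> closed_segment x b"
    using kr by (auto simp: in_segment algebra_simps intro!: exI[of _ r])
  then show "y = b"
    using first y(2) by blast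
qed

lemma exists_triangle_meeting_only_at_vertex:
  fixes x a q :: "'a::euclidean_space"
  assumes "compact Q" "x \<notin> Q" "q \<in> Q" "closed_segment x a \<inter> Q = {}"
  obtains b \<kappa> \<rho> where "b \<in> Q" "b - x = \<kappa> *\<^sub>R (a - x) + \<rho> *\<^sub>R (q - x)"
    "0 \<le> \<kappa>" "0 < \<rho>" "\<kappa> + \<rho> \<le> 1"
    "\<And>y. y \<in> convex hull {a, b, x} \<Longrightarrow> y \<in> Q \<Longrightarrow> y = b"
proof -
  obtain \<alpha>0 \<beta>0 where ab0: "0 \<le> \<alpha>0" "0 \<le> \<beta>0" "\<alpha>0 + \<beta>0 \<le> 1"
      "x + \<alpha>0 *\<^sub>R (a - x) + \<beta>0 *\<^sub>R (q - x) \<in> Q"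
    and least: "\<And>\<alpha> \<beta>. 0 \<le> \<alpha> \<Longrightarrow> 0 \<le> \<beta> \<Longrightarrow> \<alpha> + \<beta> \<le> 1
      \<Longrightarrow> x + \<alpha> *\<^sub>R (a - x) + \<beta> *\<^sub>R (q - x) \<in> Q \<Longrightarrow> \<beta>0 / (\<alpha>0 + \<beta>0) \<le> \<beta> / (\<alpha> + \<beta>)"
    using exists_point_of_least_slope[OF assms(1,2), of "q - x" "a - x"] assms(3) by auto
  define b' where "b' = x + \<alpha>0 *\<^sub>R (a - x) + \<beta>0 *\<^sub>R (q - x)"
  have "\<beta>0 \<noteq> 0"
  proof
    assume "\<beta>0 = 0"
    then have "b' = (1 - \<alpha>0) *\<^sub>R x + \<alpha>0 *\<^sub>R a"
      by (simp add: b'_def algebra_simps)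
    then have "b' \<in> closed_segment x a"
      using ab0 \<open>\<beta>0 = 0\<close> by (auto simp: in_segment)
    then show False
      using ab0(4) assms(4) by (auto simp: b'_def)
  qed
  obtain b where b: "b \<in> Q" "b \<in> closed_segment x b'"
    and first: "\<And>z. z \<in> closed_segment x b \<Longrightarrow> z \<in> Q \<Longrightarrow> z = b"
  proof (rule closed_segment_first_point[OF assms(1)])
    show "closed_segment x b' \<inter> Q \<noteq> {}"
      using ab0(4) by (auto simp: b'_def)
  qed blast
  then obtain \<tau> where \<tau>: "0 \<le> \<tau>" "\<tau> \<le> 1" "b - x = \<tau> *\<^sub>R (b' - x)"
    by (auto simp: in_segment algebra_simps)
  have "\<tau> \<noteq> 0"
    using \<tau>(3) b(1) assms(2) by auto
  have b_eq: "b - x = (\<tau> * \<alpha>0) *\<^sub>R (a - x) + (\<tau> * \<beta>0) *\<^sub>R (q - x)"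
    using \<tau>(3) by (simp add: b'_def algebra_simps)
  moreover have "\<tau> * \<alpha>0 + \<tau> * \<beta>0 \<le> 1"
    using \<tau> ab0 by (simp add: mult_le_one flip: distrib_left)
  moreover have "(\<tau> * \<beta>0) / (\<tau> * \<alpha>0 + \<tau> * \<beta>0) = \<beta>0 / (\<alpha>0 + \<beta>0)"
    using \<open>\<tau> \<noteq> 0\<close> by (simp flip: distrib_left)
  moreover have "0 \<le> \<tau> * \<alpha>0" "0 < \<tau> * \<beta>0"
    using \<tau> ab0 \<open>\<tau> \<noteq> 0\<close> \<open>\<beta>0 \<noteq> 0\<close> by simp_all
  ultimately show thesis
    using that[OF b(1) b_eq] eq_if_mem_triangle_of_least_slope[OF _ assms(2) b_eq _ _ _ first] least
    by simp
qed

lemma eq_if_mem_triangle_beyond_last_ray: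
  fixes x p q a b y :: "'a::euclidean_space"
  assumes beyond: "\<And>s. t < s \<Longrightarrow> s \<le> 1 \<Longrightarrow> closed_segment x ((1 - s) *\<^sub>R p + s *\<^sub>R q) \<inter> P = {}"
    and t: "0 \<le> t" "t < 1"
    and a: "a = x + l *\<^sub>R ((1 - t) *\<^sub>R p + t *\<^sub>R q - x)" "0 \<le> l" "l \<le> 1"
    and first: "\<And>z. z \<in> closed_segment x a \<Longrightarrow> z \<in> P \<Longrightarrow> z = a"
    and b: "b - x = \<kappa> *\<^sub>R (a - x) + \<rho> *\<^sub>R (q - x)" "0 \<le> \<kappa>" "0 < \<rho>" "\<kappa> + \<rho> \<le> 1"
    and y: "y \<in> convex hull {a, b, x}" "y \<in> P"
  shows "y = a"
proof -
  obtain k r where kr: "0 \<le> k" "0 \<le> r" "k + r \<le> 1" "y = x + k *\<^sub>R (a - x) + r *\<^sub>R (b - x)"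
    using y(1) by (rule convex_hull_3_eq_cone)
  show ?thesis
  proof (cases "r = 0")
    case True
    then have "y \<in> closed_segment x a"
      using kr by (auto simp: in_segment algebra_simps intro!: exI[of _ k])
    then show ?thesis
      using first y(2) by blast
  next
    case False
    define K B where "K = k + r * \<kappa>" and "B = r * \<rho>"
    define \<alpha> \<beta> where "\<alpha> = K * l * (1 - t)" and "\<beta> = K * l * t + B"
    have "0 \<le> K" "0 < B"
      using kr b False by (simp_all add: K_def B_def)
    have "r * (\<kappa> + \<rho>) \<le> r"
      using b(4) kr(2) mult_left_mono[of _ 1 r] by simp
    then have "K + B \<le> 1"
      using kr(3) by (simp add: K_def B_def algebra_simps)
    moreover have "K * l \<le> K"
      using \<open>0 \<le> K\<close> a(3) mult_left_mono[of l 1 K] by simp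
    ultimately have "\<alpha> + \<beta> \<le> 1"
      by (simp add: \<alpha>_def \<beta>_def algebra_simps)
    have "0 \<le> \<alpha>" "0 < \<beta>"
      using \<open>0 \<le> K\<close> \<open>0 < B\<close> a(2) t by (simp_all add: \<alpha>_def \<beta>_def add_nonneg_pos)
    have "y = x + \<alpha> *\<^sub>R (p - x) + \<beta> *\<^sub>R (q - x)"
      using kr(4) b(1) a(1) by (simp add: \<alpha>_def \<beta>_def K_def B_def algebra_simps)
    then have "y \<in> closed_segment x ((1 - \<beta> / (\<alpha> + \<beta>)) *\<^sub>R p + (\<beta> / (\<alpha> + \<beta>)) *\<^sub>R q)"
      using \<open>0 \<le> \<alpha>\<close> \<open>0 < \<beta>\<close> \<open>\<alpha> + \<beta> \<le> 1\<close> by (intro mem_closed_segment_to_chord) auto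
    moreover have "t < \<beta> / (\<alpha> + \<beta>)"
      using \<open>0 \<le> \<alpha>\<close> \<open>0 < \<beta>\<close> \<open>0 < B\<close> t
      by (simp add: less_divide_eq \<alpha>_def \<beta>_def algebra_simps)
    moreover have "\<beta> / (\<alpha> + \<beta>) \<le> 1"
      using \<open>0 \<le> \<alpha>\<close> \<open>0 < \<beta>\<close> by simp
    ultimately show ?thesis
      using beyond y(2) by blast
  qed
qed

section \<open>Bridges\<close>

lemma equiv_reach:
  assumes "\<And>x y. E x y \<Longrightarrow> E y x"
  shows "equiv V (reach V E)"
proof -
  define r where "r = {(x, y). x \<in> V \<and> y \<in> V \<and> E x y}"
  have "sym r"
    using assms by (auto simp: r_def sym_def)
  then have "sym (r\<^sup>*)"
    by (rule sym_rtrancl)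
  then show ?thesis
    unfolding equiv_def reach_def r_def[symmetric]
    by (auto simp: refl_on_def sym_def trans_def intro: rtrancl_trans)
qed

lemma card_quotient_less_if_finer:
  assumes "finite V" "equiv V R1" "equiv V R2" "R2 \<subseteq> R1" "(u, v) \<in> R1" "(u, v) \<notin> R2"
  shows "card (V // R1) < card (V // R2)"
proof -
  define f where "f X = R1 `` X" for X
  have uv: "u \<in> V" "v \<in> V"
    using assms(2,5) by (auto dest: equiv_type)
  have image_class: "f (R2 `` {x}) = R1 `` {x}" if "x \<in> V" for x
  proof
    show "f (R2 `` {x}) \<subseteq> R1 `` {x}"
      using assms(2,4) unfolding f_def equiv_def trans_def by blast
    show "R1 `` {x} \<subseteq> f (R2 `` {x})"
      using assms(3) that unfolding f_def equiv_def refl_on_def by blast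
  qed
  have "f ` (V // R2) = (\<Union>x\<in>V. {f (R2 `` {x})})"
    by (simp add: quotient_def image_UN)
  also have "\<dots> = V // R1"
    unfolding quotient_def using image_class by (intro SUP_cong) auto
  finally have "f ` (V // R2) = V // R1" .
  moreover have "\<not> inj_on f (V // R2)"
  proof
    assume "inj_on f (V // R2)"
    moreover have "f (R2 `` {u}) = f (R2 `` {v})"
      using image_class uv assms(2,5) by (simp add: equiv_class_eq_iff)
    ultimately have "R2 `` {u} = R2 `` {v}"
      using uv by (auto intro: quotientI dest: inj_onD)
    then show False
      using assms(3,6) uv by (simp add: equiv_class_eq_iff)
  qed
  moreover have "finite (V // R2)"
    using assms(1,3) by (auto intro: finite_quotient dest: equiv_type)
  ultimately show ?thesis
    by (metis card_image_le inj_on_iff_eq_card order_le_imp_less_or_eq)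
qed

lemma is_bridge_if_separated:
  assumes "simple_graph V E" "E u v" "u \<in> S" "v \<notin> S"
    and closed: "\<And>x y. delete_edge E u v x y \<Longrightarrow> x \<in> S \<Longrightarrow> y \<in> S"
  shows "is_bridge V E u v"
proof -
  define E' where "E' = delete_edge E u v"
  have edge_sym: "E y x" if "E x y" for x y
    using assms(1) that by (auto simp: simple_graph_def)
  then have "equiv V (reach V E)" "equiv V (reach V E')"
    by (auto simp: E'_def delete_edge_def insert_commute intro!: equiv_reach)
  moreover have "reach V E' \<subseteq> reach V E"
    unfolding reach_def by (intro Int_mono rtrancl_mono) (auto simp: E'_def delete_edge_def)
  moreover have "(u, v) \<in> reach V E"
    using assms(1,2) by (auto simp: reach_def simple_graph_def)
  moreover have "y \<in> S" if "(x, y) \<in> {(x, y). x \<in> V \<and> y \<in> V \<and> E' x y}\<^sup>*" "x \<in> S" for x y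
    using that by (induction rule: rtrancl_induct) (auto simp: E'_def intro: closed)
  then have "(u, v) \<notin> reach V E'"
    using assms(3,4) by (auto simp: reach_def)
  ultimately have "num_components V E < num_components V E'"
    unfolding num_components_def using assms(1)
    by (intro card_quotient_less_if_finer) (auto simp: simple_graph_def)
  then show ?thesis
    using assms(2) by (simp add: is_bridge_def E'_def)
qed

section \<open>Convex compact visibility representations\<close>

locale compact_convex_visibility_rep =
  fixes V :: "'v set" and E :: "'v \<Rightarrow> 'v \<Rightarrow> bool" and R :: "'v \<Rightarrow> (real^2) set"
  assumes simple: "simple_graph V E"
    and rep: "visibility_rep V E R"
    and compact_convex: "\<forall>v\<in>V. compact (R v) \<and> convex (R v)"
begin

definition others :: "'v \<Rightarrow> 'v \<Rightarrow> (real^2) set" where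
  "others u v = \<Union> (R ` (V - {u, v}))"

definition common_neighbour :: "'v \<Rightarrow> 'v \<Rightarrow> bool" where
  "common_neighbour u v \<longleftrightarrow> (\<exists>w\<in>V. w \<noteq> u \<and> w \<noteq> v \<and> E u w \<and> E v w)"

lemma edge_sym: "E x y \<Longrightarrow> E y x"
  using simple by (auto simp: simple_graph_def)

lemma edge_imp_vertices: "E x y \<Longrightarrow> x \<in> V \<and> y \<in> V \<and> x \<noteq> y"
  using simple by (auto simp: simple_graph_def)

lemma eq_if_mem_regions: "z \<in> R x \<Longrightarrow> z \<in> R y \<Longrightarrow> x \<in> V \<Longrightarrow> y \<in> V \<Longrightarrow> x = y"
  using rep by (auto simp: visibility_rep_def)

lemma region_nonempty: "x \<in> V \<Longrightarrow> R x \<noteq> {}"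
  using rep by (auto simp: visibility_rep_def)

lemma compact_region: "x \<in> V \<Longrightarrow> compact (R x)"
  using compact_convex by auto

lemma convex_region: "x \<in> V \<Longrightarrow> convex (R x)"
  using compact_convex by auto

lemma closed_segment_subset_region: "a \<in> R x \<Longrightarrow> b \<in> R x \<Longrightarrow> x \<in> V \<Longrightarrow> closed_segment a b \<subseteq> R x"
  using convex_region by (simp add: closed_segment_subset)

lemma mem_others_iff: "z \<in> others u v \<longleftrightarrow> (\<exists>w\<in>V. w \<noteq> u \<and> w \<noteq> v \<and> z \<in> R w)"
  by (auto simp: others_def)

lemma region_subset_others: "w \<in> V \<Longrightarrow> w \<noteq> u \<Longrightarrow> w \<noteq> v \<Longrightarrow> R w \<subseteq> others u v"
  by (auto simp: others_def)

lemma others_commute: "others u v = others v u"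
  by (auto simp: others_def insert_commute)

lemma common_neighbour_commute: "common_neighbour u v = common_neighbour v u"
  by (auto simp: common_neighbour_def)

lemma compact_others: "compact (others u v)"
  using simple compact_convex unfolding others_def simple_graph_def by (intro compact_UN) auto

lemma edge_if_clear_segment:
  assumes "u \<in> V" "w \<in> V" "u \<noteq> w" "a \<in> R u" "c \<in> R w" "closed_segment a c \<inter> others u w = {}"
  shows "E u w"
proof -
  have "sightline V R u w a c"
    using assms by (auto simp: sightline_def others_def)
  then show ?thesis
    using rep assms(1-3) by (auto simp: visibility_rep_def)
qed

lemma edge_imp_clear_segment:
  assumes "E u v"
  obtains a b where "a \<in> R u" "b \<in> R v" "closed_segment a b \<inter> others u v = {}"
proof -
  obtain a b where "sightline V R u v a b"
    using rep assms edge_imp_vertices[OF assms] by (auto simp: visibility_rep_def)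
  then show thesis
    using that by (auto simp: sightline_def others_def)
qed

lemma edge_from_first_blocker:
  assumes "u \<in> V" "v \<in> V" "w \<in> V" "w \<noteq> u" "w \<noteq> v" "p \<in> R u" "q \<in> R v"
    and z: "z \<in> R w" "z \<in> closed_segment p q"
    and first: "\<And>y. y \<in> closed_segment q z \<Longrightarrow> y \<in> others u v \<Longrightarrow> y = z"
  shows "E w v"
proof (rule edge_if_clear_segment[OF assms(3,2,5) z(1) assms(7)])
  have False if y: "y \<in> closed_segment z q" "y \<in> R w'" and w': "w' \<in> V" "w' \<noteq> w" "w' \<noteq> v" for y w'
  proof (cases "w' = u")
    case True
    have "z \<in> closed_segment p y"
      using z(2) y(1) by (rule mem_closed_segment_truncate)
    also have "\<dots> \<subseteq> R u"
      using closed_segment_subset_region[OF assms(6) _ assms(1)] y(2) True by simp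
    finally show False
      using eq_if_mem_regions z(1) assms(1,3,4) by blast
  next
    case False
    then have "y = z"
      using first y w' by (auto simp: closed_segment_commute mem_others_iff)
    then show False
      using eq_if_mem_regions y(2) z(1) w' assms(3) by blast
  qed
  then show "closed_segment z q \<inter> others w v = {}"
    by (auto simp: mem_others_iff)
qed

lemma edge_to_earlier_fan_point:
  assumes "u \<in> V" "w \<in> V" "w \<noteq> u" "w \<noteq> v" "p \<in> R u" "p' \<in> R u"
    and earlier: "\<And>\<mu>. 0 \<le> \<mu> \<Longrightarrow> \<mu> < l1 \<Longrightarrow> closed_segment ((1 - \<mu>) *\<^sub>R p + \<mu> *\<^sub>R p') q \<inter> others u v = {}"
    and z: "z \<in> R w" "z \<in> closed_segment ((1 - l1) *\<^sub>R p + l1 *\<^sub>R p') q"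
    and l: "0 \<le> l" "l < l1" "l1 \<le> 1" "closed_segment z ((1 - l) *\<^sub>R p + l *\<^sub>R p') \<inter> R v = {}"
  shows "E w u"
proof (rule edge_if_clear_segment[OF assms(2,1,3) z(1)])
  show "(1 - l) *\<^sub>R p + l *\<^sub>R p' \<in> R u"
  proof (rule subsetD[OF closed_segment_subset_region[OF assms(5,6,1)]])
    show "(1 - l) *\<^sub>R p + l *\<^sub>R p' \<in> closed_segment p p'"
      using l(1-3) unfolding in_segment by (intro exI[of _ l]) auto
  qed
  have False if y: "y \<in> closed_segment z ((1 - l) *\<^sub>R p + l *\<^sub>R p')" "y \<in> R w'"
    and w': "w' \<in> V" "w' \<noteq> w" "w' \<noteq> u" for y w'
  proof -
    have "w' \<noteq> v"
      using y l(4) by auto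
    then have "y \<in> others u v"
      using y(2) w' by (auto simp: mem_others_iff)
    have "y \<noteq> z"
      using eq_if_mem_regions y(2) z(1) w' assms(2) by blast
    obtain r where r: "0 \<le> r" "r \<le> 1" "y = (1 - r) *\<^sub>R z + r *\<^sub>R ((1 - l) *\<^sub>R p + l *\<^sub>R p')"
      using y(1) by (auto simp: in_segment)
    moreover from this have "0 < r"
      using \<open>y \<noteq> z\<close> by (cases "r = 0") auto
    obtain \<sigma> where "0 \<le> \<sigma>" "\<sigma> \<le> 1" "z = (1 - \<sigma>) *\<^sub>R ((1 - l1) *\<^sub>R p + l1 *\<^sub>R p') + \<sigma> *\<^sub>R q"
      using z(2) by (auto simp: in_segment)
    then obtain \<mu> where "0 \<le> \<mu>" "\<mu> < l1" "y \<in> closed_segment ((1 - \<mu>) *\<^sub>R p + \<mu> *\<^sub>R p') q"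
      using mem_closed_segment_fan r \<open>0 < r\<close> l(1,2) by blast
    then show False
      using earlier \<open>y \<in> others u v\<close> by blast
  qed
  then show "closed_segment z ((1 - l) *\<^sub>R p + l *\<^sub>R p') \<inter> others w u = {}"
    by (auto simp: mem_others_iff)
qed

lemma exists_earlier_fan_point_avoiding:
  assumes "v \<in> V" "w \<in> V" "w \<noteq> v" "q \<in> R v" "z \<in> R w"
    and z: "z \<in> closed_segment q ((1 - l1) *\<^sub>R p + l1 *\<^sub>R p')" and "0 < l1" "l1 \<le> 1"
  obtains l where "0 \<le> l" "l < l1" "closed_segment z ((1 - l) *\<^sub>R p + l *\<^sub>R p') \<inter> R v = {}"
proof -
  define M where "M = {l \<in> {0..1}. closed_segment z ((1 - l) *\<^sub>R p + l *\<^sub>R p') \<inter> R v \<noteq> {}}"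
  have "closed M"
    unfolding M_def
    by (intro compact_imp_closed compact_segment_family_meets compact_region assms(1) continuous_intros)
  moreover have "l1 \<notin> M"
  proof
    assume "l1 \<in> M"
    then obtain y where y: "y \<in> closed_segment z ((1 - l1) *\<^sub>R p + l1 *\<^sub>R p')" "y \<in> R v"
      by (auto simp: M_def)
    have "z \<in> closed_segment q y"
      using z y(1) by (rule mem_closed_segment_truncate)
    also have "\<dots> \<subseteq> R v"
      using closed_segment_subset_region[OF assms(4) y(2) assms(1)] .
    finally show False
      using eq_if_mem_regions assms(1-3,5) by blast
  qed
  ultimately obtain l where "0 \<le> l" "l < l1" "l \<notin> M"
    using exists_less_not_in_closed assms(7) by blast
  then show thesis
    using that assms(8) by (simp add: M_def)
qed

text \<open>Move the endpoint from p towards p' up to the first blocked segment to q. Its blocking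
  point nearest to q sees R v, and from a slightly earlier endpoint it also sees R u.\<close>

lemma common_neighbour_if_blocked:
  assumes uv: "u \<in> V" "v \<in> V" "u \<noteq> v" and p: "p \<in> R u" "p' \<in> R u" and q: "q \<in> R v"
    and clear: "closed_segment p q \<inter> others u v = {}"
    and blocked: "closed_segment p' q \<inter> others u v \<noteq> {}"
  shows "common_neighbour u v"
proof -
  define P where "P l = (1 - l) *\<^sub>R p + l *\<^sub>R p'" for l :: real
  define L where "L = {l \<in> {0..1}. closed_segment (P l) q \<inter> others u v \<noteq> {}}"
  have "compact L"
    unfolding L_def P_def by (intro compact_segment_family_meets compact_others continuous_intros)
  moreover have "1 \<in> L"
    using blocked by (simp add: L_def P_def)
  ultimately obtain l1 where l1: "l1 \<in> L" "\<And>l. l \<in> L \<Longrightarrow> l1 \<le> l"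
    using compact_attains_inf[of L] by blast
  have "l1 \<noteq> 0"
    using l1(1) clear by (auto simp: L_def P_def)
  then have l1_range: "0 < l1" "l1 \<le> 1"
    using l1(1) by (auto simp: L_def)
  have earlier: "closed_segment (P \<mu>) q \<inter> others u v = {}" if "0 \<le> \<mu>" "\<mu> < l1" for \<mu>
    using l1(2)[of \<mu>] that l1_range by (force simp: L_def)
  obtain z where z: "z \<in> others u v" "z \<in> closed_segment q (P l1)"
    and first: "\<And>y. y \<in> closed_segment q z \<Longrightarrow> y \<in> others u v \<Longrightarrow> y = z"
  proof (rule closed_segment_first_point[OF compact_others])
    show "closed_segment q (P l1) \<inter> others u v \<noteq> {}"
      using l1(1) by (simp add: L_def closed_segment_commute)
  qed blast
  then obtain w where w: "w \<in> V" "w \<noteq> u" "w \<noteq> v" "z \<in> R w"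
    by (auto simp: mem_others_iff)
  have "P l1 \<in> R u"
    using closed_segment_subset_region[OF p uv(1)] l1_range by (force simp: P_def in_segment)
  have "E w v"
    using edge_from_first_blocker[OF uv(1,2) w(1-3) \<open>P l1 \<in> R u\<close> q w(4)] z(2) first
    by (simp add: closed_segment_commute)
  obtain l where "0 \<le> l" "l < l1" "closed_segment z (P l) \<inter> R v = {}"
    using exists_earlier_fan_point_avoiding[OF uv(2) w(1,3) q w(4) _ l1_range] z(2)
    unfolding P_def by blast
  then have "E w u"
    using edge_to_earlier_fan_point[OF uv(1) w(1-3) p, of l1 q z l] earlier w(4) z(2) l1_range
    by (simp add: P_def closed_segment_commute)
  then show ?thesis
    using \<open>E w v\<close> w edge_sym unfolding common_neighbour_def by blast
qed

lemma closed_segment_clear_if_no_common_neighbour: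
  assumes "E u v" "\<not> common_neighbour u v" "a \<in> R u" "b \<in> R v"
  shows "closed_segment a b \<inter> others u v = {}"
proof -
  have uv: "u \<in> V" "v \<in> V" "u \<noteq> v"
    using edge_imp_vertices[OF assms(1)] by auto
  obtain a0 b0 where ab0: "a0 \<in> R u" "b0 \<in> R v" "closed_segment a0 b0 \<inter> others u v = {}"
    using edge_imp_clear_segment[OF assms(1)] .
  have "closed_segment a b0 \<inter> others u v = {}"
    using common_neighbour_if_blocked[OF uv ab0(1) assms(3) ab0(2,3)] assms(2) by blast
  then have "closed_segment b0 a \<inter> others v u = {}"
    by (simp add: closed_segment_commute others_commute)
  then have "closed_segment b a \<inter> others v u = {}"
    using common_neighbour_if_blocked[OF uv(2,1) uv(3)[symmetric] ab0(2) assms(4,3)] assms(2)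
    by (auto simp: common_neighbour_commute)
  then show ?thesis
    by (simp add: closed_segment_commute others_commute)
qed

lemma edge_to_apex:
  assumes "u \<in> V" "w \<in> V" "w \<noteq> u" "w \<noteq> v" "a \<in> R u" "c \<in> R w" "b \<notin> closed_segment a c"
    and only_b: "\<And>y. y \<in> convex hull {a, b, c} \<Longrightarrow> y \<in> R v \<Longrightarrow> y = b"
    and only_c: "\<And>y. y \<in> convex hull {a, b, c} \<Longrightarrow> y \<in> others u v \<Longrightarrow> y = c"
  shows "E u w"
proof (rule edge_if_clear_segment[OF assms(1,2) assms(3)[symmetric] assms(5,6)])
  have False if y: "y \<in> closed_segment a c" "y \<in> R w'" and w': "w' \<in> V" "w' \<noteq> u" "w' \<noteq> w" for y w'
  proof -
    have "y \<in> convex hull {a, b, c}"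
      using y(1) hull_mono[of "{a, c}" "{a, b, c}"] by (auto simp: segment_convex_hull)
    then show False
    proof (cases "w' = v")
      case True
      then show False
        using only_b y assms(7) \<open>y \<in> convex hull {a, b, c}\<close> by blast
    next
      case False
      then have "y = c"
        using only_c \<open>y \<in> convex hull {a, b, c}\<close> y(2) w' by (auto simp: mem_others_iff)
      then show False
        using eq_if_mem_regions y(2) assms(2,6) w' by blast
    qed
  qed
  then show "closed_segment a c \<inter> others u w = {}"
    by (auto simp: mem_others_iff)
qed

lemma common_neighbour_if_empty_triangle:
  assumes uv: "u \<in> V" "v \<in> V" "u \<noteq> v" and a: "a \<in> R u" and b: "b \<in> R v" and c0: "c0 \<in> others u v"
    and clear: "closed_segment a b \<inter> others u v = {}"
    and only_a: "\<And>y. y \<in> convex hull {a, b, c0} \<Longrightarrow> y \<in> R u \<Longrightarrow> y = a"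
    and only_b: "\<And>y. y \<in> convex hull {a, b, c0} \<Longrightarrow> y \<in> R v \<Longrightarrow> y = b"
    and nondegenerate: "det2 (a - c0) (b - c0) \<noteq> 0"
  shows "common_neighbour u v"
proof -
  \<comment> \<open>the point of the other regions in the triangle nearest to ab sees both a and b\<close>
  define K where "K = others u v \<inter> convex hull {a, b, c0}"
  have "compact K"
    unfolding K_def by (intro compact_Int compact_others finite_imp_compact_convex_hull) auto
  moreover have "c0 \<in> K"
    using c0 by (simp add: K_def hull_inc)
  moreover have "continuous_on K (\<lambda>z. infdist z (closed_segment a b))"
    by (intro continuous_intros)
  ultimately obtain c where c: "c \<in> K" and nearest: "\<And>z. z \<in> K \<Longrightarrow>
      infdist c (closed_segment a b) \<le> infdist z (closed_segment a b)"
    using continuous_attains_inf[of K] by blast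
  then obtain w where w: "w \<in> V" "w \<noteq> u" "w \<noteq> v" "c \<in> R w"
    by (auto simp: K_def mem_others_iff)
  have c_hull: "c \<in> convex hull {a, b, c0}"
    using c by (simp add: K_def)
  have sub: "convex hull {a, b, c} \<subseteq> convex hull {a, b, c0}"
    using c_hull by (intro hull_minimal) (auto simp: hull_inc)
  have "c \<notin> closed_segment a b"
    using c clear by (auto simp: K_def)
  then have only_c: "y = c" if "y \<in> convex hull {a, b, c}" "y \<in> others u v" for y
    using eq_if_nearest_to_segment[OF c _ nearest] that sub by (auto simp: K_def)
  have "b \<noteq> c" "a \<noteq> c"
    using eq_if_mem_regions a b w uv by blast+
  moreover have "det2 (b - c0) (a - c0) \<noteq> 0"
    using nondegenerate by (metis det2_antisym neg_equal_0_iff_equal)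
  moreover have "c \<in> convex hull {b, a, c0}"
    using c_hull by (simp add: insert_commute)
  ultimately have "b \<notin> closed_segment a c" "a \<notin> closed_segment b c"
    using eq_if_vertex_on_segment_into_triangle c_hull nondegenerate by blast+
  have "E u w"
  proof (rule edge_to_apex[OF uv(1) w(1-3) a w(4) \<open>b \<notin> closed_segment a c\<close>])
    show "y = b" if "y \<in> convex hull {a, b, c}" "y \<in> R v" for y
      using only_b that sub by blast
  qed (rule only_c)
  moreover have "E v w"
  proof (rule edge_to_apex[OF uv(2) w(1,3,2) b w(4) \<open>a \<notin> closed_segment b c\<close>])
    show "y = a" if "y \<in> convex hull {b, a, c}" "y \<in> R u" for y
      using only_a that sub by (auto simp: insert_commute)
    show "y = c" if "y \<in> convex hull {b, a, c}" "y \<in> others v u" for y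
      using only_c that by (simp add: insert_commute others_commute)
  qed
  ultimately show ?thesis
    using w unfolding common_neighbour_def by blast
qed

lemma common_neighbour_if_corner:
  assumes uv: "E u v" and x: "x \<in> others u v" and q: "q \<in> R v"
    and nondegenerate: "det2 (p - x) (q - x) \<noteq> 0"
    and t: "0 \<le> t" "t < 1"
    and beyond: "\<And>s. t < s \<Longrightarrow> s \<le> 1 \<Longrightarrow> closed_segment x ((1 - s) *\<^sub>R p + s *\<^sub>R q) \<inter> R u = {}"
    and a: "a \<in> R u" "a = x + l *\<^sub>R ((1 - t) *\<^sub>R p + t *\<^sub>R q - x)" "0 < l" "l \<le> 1"
    and first: "\<And>z. z \<in> closed_segment x a \<Longrightarrow> z \<in> R u \<Longrightarrow> z = a"
    and clear: "closed_segment x a \<inter> R v = {}"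
  shows "common_neighbour u v"
proof (rule ccontr)
  assume no_common: "\<not> common_neighbour u v"
  have V: "u \<in> V" "v \<in> V" "u \<noteq> v"
    using edge_imp_vertices[OF uv] by auto
  have "x \<notin> R v"
    using x eq_if_mem_regions V(2) by (auto simp: mem_others_iff)
  obtain b \<kappa> \<rho> where b: "b \<in> R v" "b - x = \<kappa> *\<^sub>R (a - x) + \<rho> *\<^sub>R (q - x)"
      "0 \<le> \<kappa>" "0 < \<rho>" "\<kappa> + \<rho> \<le> 1"
    and only_b: "\<And>y. y \<in> convex hull {a, b, x} \<Longrightarrow> y \<in> R v \<Longrightarrow> y = b"
    by (rule exists_triangle_meeting_only_at_vertex[OF compact_region[OF V(2)] \<open>x \<notin> R v\<close> q clear]) blast
  have only_a: "y = a" if "y \<in> convex hull {a, b, x}" "y \<in> R u" for y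
    using eq_if_mem_triangle_beyond_last_ray[OF beyond t a(2) _ a(4) first b(2-5) that] a(3) by simp
  have "a - x = (l * (1 - t)) *\<^sub>R (p - x) + (l * t) *\<^sub>R (q - x)"
    using a(2) by (simp add: algebra_simps)
  moreover have "det2 A B = \<rho> * (l * (1 - t)) * det2 P Q"
    if "B = \<kappa> *\<^sub>R A + \<rho> *\<^sub>R Q" "A = (l * (1 - t)) *\<^sub>R P + (l * t) *\<^sub>R Q" for A B P Q
  proof -
    have "det2 A B = \<rho> * det2 A Q"
      using that(1) by simp
    also have "\<dots> = \<rho> * (l * (1 - t)) * det2 P Q"
      using that(2) by simp
    finally show ?thesis .
  qed
  ultimately have "det2 (a - x) (b - x) = \<rho> * (l * (1 - t)) * det2 (p - x) (q - x)"
    using b(2) by blast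
  then have "det2 (a - x) (b - x) \<noteq> 0"
    using nondegenerate b(4) a(3) t(2) by simp
  then show False
    using common_neighbour_if_empty_triangle[OF V a(1) b(1) x
        closed_segment_clear_if_no_common_neighbour[OF uv no_common a(1) b(1)] only_a only_b]
      no_common by blast
qed

lemma in_shadow_if_no_common_neighbour:
  assumes uv: "E u v" and no_common: "\<not> common_neighbour u v" and x: "x \<in> others u v"
  shows "x \<in> shadow (R u) (R v) \<or> x \<in> shadow (R v) (R u)"
proof (rule ccontr)
  assume "\<not> ?thesis"
  then obtain p q where p: "p \<in> R u" "closed_segment x p \<inter> R v = {}"
    and q: "q \<in> R v" "closed_segment x q \<inter> R u = {}"
    by (auto simp: shadow_def)
  have V: "u \<in> V" "v \<in> V" "u \<noteq> v"
    using edge_imp_vertices[OF uv] by auto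
  have "x \<notin> R u" "x \<notin> R v"
    using x eq_if_mem_regions V(1,2) by (auto simp: mem_others_iff)
  have nondegenerate: "det2 (p - x) (q - x) \<noteq> 0"
  proof (rule det2_neq_0_if_none_between)
    show "x \<notin> closed_segment p q"
      using closed_segment_clear_if_no_common_neighbour[OF uv no_common p(1) q(1)] x by auto
  qed (use p q in auto)
  obtain t a l where t: "0 \<le> t" "t < 1"
    and beyond_t: "\<And>s. t < s \<Longrightarrow> s \<le> 1 \<Longrightarrow> closed_segment x ((1 - s) *\<^sub>R p + s *\<^sub>R q) \<inter> R u = {}"
    and a: "a \<in> R u" "a = x + l *\<^sub>R ((1 - t) *\<^sub>R p + t *\<^sub>R q - x)" "0 < l" "l \<le> 1"
    and first_a: "\<And>z. z \<in> closed_segment x a \<Longrightarrow> z \<in> R u \<Longrightarrow> z = a"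
    by (rule last_ray_meeting[OF compact_region[OF V(1)] \<open>x \<notin> R u\<close> p(1) q(2)]) blast
  obtain t' b l' where t': "0 \<le> t'" "t' < 1"
    and beyond_t': "\<And>s. t' < s \<Longrightarrow> s \<le> 1 \<Longrightarrow> closed_segment x ((1 - s) *\<^sub>R q + s *\<^sub>R p) \<inter> R v = {}"
    and b: "b \<in> R v" "b = x + l' *\<^sub>R ((1 - t') *\<^sub>R q + t' *\<^sub>R p - x)" "0 < l'" "l' \<le> 1"
    and first_b: "\<And>z. z \<in> closed_segment x b \<Longrightarrow> z \<in> R v \<Longrightarrow> z = b"
    by (rule last_ray_meeting[OF compact_region[OF V(2)] \<open>x \<notin> R v\<close> q(1) p(2)]) blast
  have "closed_segment x a \<inter> R v \<noteq> {}"
    using common_neighbour_if_corner[OF uv x q(1) nondegenerate t beyond_t a first_a] no_common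
    by blast
  then obtain \<beta> where \<beta>: "\<beta> \<in> closed_segment x a" "\<beta> \<in> R v"
    by blast
  have "det2 (q - x) (p - x) \<noteq> 0"
    using nondegenerate by (metis det2_antisym neg_equal_0_iff_equal)
  then have "closed_segment x b \<inter> R u \<noteq> {}"
    using common_neighbour_if_corner[OF edge_sym[OF uv] _ p(1) _ t' beyond_t' b first_b] x no_common
    by (auto simp: others_commute common_neighbour_commute)
  then obtain \<alpha> where \<alpha>: "\<alpha> \<in> closed_segment x b" "\<alpha> \<in> R u"
    by blast
  \<comment> \<open>the segments from x to the first points a and b cross R v and R u, so R u meets R v\<close>
  have "\<alpha> \<noteq> x" "\<alpha> \<noteq> b" "\<beta> \<noteq> x" "\<beta> \<noteq> a"
    using \<alpha> \<beta> \<open>x \<notin> R u\<close> \<open>x \<notin> R v\<close> a(1) b(1) eq_if_mem_regions V by blast+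
  then have "closed_segment \<alpha> a \<inter> closed_segment b \<beta> \<noteq> {}"
    using \<alpha>(1) \<beta>(1) by (intro closed_segment_cevians_meet)
  moreover have "closed_segment \<alpha> a \<subseteq> R u" "closed_segment b \<beta> \<subseteq> R v"
    using closed_segment_subset_region[OF \<alpha>(2) a(1) V(1)] closed_segment_subset_region[OF b(1) \<beta>(2) V(2)] .
  ultimately show False
    using eq_if_mem_regions V by blast
qed

lemma region_within_shadow:
  assumes uv: "E u v" and no_common: "\<not> common_neighbour u v" and w: "w \<in> V" "w \<noteq> u" "w \<noteq> v"
  shows "R w \<subseteq> shadow (R u) (R v) \<or> R w \<subseteq> shadow (R v) (R u)"
proof (rule ccontr)
  assume "\<not> ?thesis"
  then obtain z z' where z: "z \<in> R w" "z \<notin> shadow (R u) (R v)" and z': "z' \<in> R w" "z' \<notin> shadow (R v) (R u)"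
    by blast
  have V: "u \<in> V" "v \<in> V" "u \<noteq> v"
    using edge_imp_vertices[OF uv] by auto
  have "z \<in> shadow (R v) (R u)" "z' \<in> shadow (R u) (R v)"
    using in_shadow_if_no_common_neighbour[OF uv no_common] region_subset_others[OF w] z z' by blast+
  then have "closed_segment z' z \<inter> (R u \<union> R v) \<noteq> {}"
    using V eq_if_mem_regions
    by (intro closed_segment_between_shadows_meets compact_region) (auto dest: region_nonempty)
  moreover have "closed_segment z' z \<subseteq> R w"
    using closed_segment_subset_region[OF z'(1) z(1) w(1)] .
  ultimately show False
    using eq_if_mem_regions V w by blast
qed

definition shadow_side :: "'v \<Rightarrow> 'v \<Rightarrow> 'v set" where
  "shadow_side u v = insert u {w \<in> V - {u, v}. R w \<subseteq> shadow (R u) (R v)}"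

lemma shadow_side_closed:
  assumes uv: "E u v" and no_common: "\<not> common_neighbour u v"
    and xy: "delete_edge E u v x y" and x: "x \<in> shadow_side u v"
  shows "y \<in> shadow_side u v"
proof (rule ccontr)
  assume y: "y \<notin> shadow_side u v"
  have V: "u \<in> V" "v \<in> V" "u \<noteq> v"
    using edge_imp_vertices[OF uv] by auto
  have "E x y" "{x, y} \<noteq> {u, v}"
    using xy by (auto simp: delete_edge_def)
  then have "x \<in> V" "y \<in> V" "y \<noteq> u" "x \<noteq> v"
    using edge_imp_vertices x y V(3) by (auto simp: shadow_side_def)
  obtain c d where cd: "c \<in> R x" "d \<in> R y" "closed_segment c d \<inter> others x y = {}"
    using edge_imp_clear_segment[OF \<open>E x y\<close>] .
  have y_shadow: "d \<in> shadow (R v) (R u)" if "y \<noteq> v"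
    using region_within_shadow[OF uv no_common \<open>y \<in> V\<close> \<open>y \<noteq> u\<close> that] y cd(2) \<open>y \<in> V\<close> that
    by (auto simp: shadow_side_def)
  show False
  proof (cases "x = u")
    case True
    then have "y \<noteq> v"
      using \<open>{x, y} \<noteq> {u, v}\<close> by auto
    then have "closed_segment d c \<inter> R v \<noteq> {}"
      using y_shadow True cd(1) by (auto simp: shadow_def)
    moreover have "R v \<subseteq> others x y"
      using region_subset_others[OF V(2)] V(3) True \<open>y \<noteq> v\<close> by auto
    ultimately show False
      using cd(3) by (auto simp: closed_segment_commute)
  next
    case False
    then have "c \<in> shadow (R u) (R v)"
      using x cd(1) by (auto simp: shadow_side_def)
    show False
    proof (cases "y = v")
      case True
      then have "closed_segment c d \<inter> R u \<noteq> {}"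
        using \<open>c \<in> shadow (R u) (R v)\<close> cd(2) by (auto simp: shadow_def)
      moreover have "R u \<subseteq> others x y"
        using region_subset_others[OF V(1)] \<open>x \<noteq> u\<close> \<open>y \<noteq> u\<close> by auto
      ultimately show False
        using cd(3) by blast
    next
      case False
      then have "closed_segment c d \<inter> (R u \<union> R v) \<noteq> {}"
        using \<open>c \<in> shadow (R u) (R v)\<close> y_shadow V eq_if_mem_regions
        by (intro closed_segment_between_shadows_meets compact_region) (auto dest: region_nonempty)
      moreover have "R u \<union> R v \<subseteq> others x y"
        using region_subset_others[OF V(1)] region_subset_others[OF V(2)]
          \<open>x \<noteq> u\<close> \<open>x \<noteq> v\<close> \<open>y \<noteq> u\<close> \<open>y \<noteq> v\<close> by auto
      ultimately show False
        using cd(3) by blast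
    qed
  qed
qed

lemma is_bridge_if_no_common_neighbour:
  assumes "E u v" "\<not> common_neighbour u v"
  shows "is_bridge V E u v"
proof (rule is_bridge_if_separated[OF simple assms(1)])
  show "u \<in> shadow_side u v" "v \<notin> shadow_side u v"
    using edge_imp_vertices[OF assms(1)] by (auto simp: shadow_side_def)
qed (use shadow_side_closed[OF assms] in blast)

end

theorem theorem1:
  fixes V :: "'v set" and E :: "'v \<Rightarrow> 'v \<Rightarrow> bool"
  assumes "simple_graph V E"
    and "convex_compact_visibility_graph V E"
    and "E u v"
  shows "is_bridge V E u v \<or> in_triangle V E u v"
proof -
  obtain R where "visibility_rep V E R" "\<forall>v\<in>V. compact (R v) \<and> convex (R v)"
    using assms(2) by (auto simp: convex_compact_visibility_graph_def)
  then interpret compact_convex_visibility_rep V E R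
    using assms(1) by unfold_locales
  show ?thesis
    using is_bridge_if_no_common_neighbour[OF assms(3)] assms(3)
    by (auto simp: in_triangle_def common_neighbour_def)
qed

end
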